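(* Consider the homophily-based model $X(t+1)=f_{\mathrm{HbM}}(X(t))$, $f_{\mathrm{HbM}}(X)=\operatorname{diag}(|X|\mathbf{1}_n)^{-1}XX^{\top}$. Let $Q_{\mathrm{HbM}}$ be the set of matrices $PYP^{\top}\in\mathcal{S}_{\mathrm{nz\text{-}row}}$ with $P$ a permutation matrix and $Y$ block diagonal with each diagonal block of the form $\alpha bb^{\top}$, $\alpha>0$, $b\in\{-1,+1\}^m$, $m\le n$. Then: (i) each element of $Q_{\mathrm{HbM}}$ of rank one is a locally stable fixed point of $f_{\mathrm{HbM}}$; (ii) for every $X(0)\in\mathcal{S}_{\mathrm{nz\text{-}row}}$, the following are equivalent: (a) the solution $X(t)$ satisfies the non-vanishing appraisal condition $\liminf_{t\to\infty}\min_{i,j}|X_{ij}(t)|>0$; (b) there exists $t_0>0$ such that $G(X(t))$ satisfies social balance for all $t\ge t_0$; (c) there exists $X^*\in Q_{\mathrm{HbM}}$ of rank one such that $\lim_{t\to\infty}X(t)=X^*$.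
   Context: $\mathcal{S}_{\mathrm{nz\text{-}row}}=\{X\in\mathbb{R}^{n\times n}:\text{every row of }X\text{ is non-zero}\}$; $|X|$ is entry-wise absolute value, $\mathbf{1}_n$ the all-ones vector. A fixed point $X^*$ of a map $f$ is locally stable if for every $\epsilon>0$ there is $\zeta>0$ such that $\max_{i,j}|X_{ij}(0)-X^*_{ij}|<\zeta$ implies $\max_{i,j}|X_{ij}(t)-X^*_{ij}|<\epsilon$ for all $t\ge0$, where $X(t+1)=f(X(t))$. $G(X)$ is the weighted digraph with adjacency matrix $X$; $G(X)$ satisfies social balance if $X_{ii}>0$ for all $i$ and $\operatorname{sign}(X_{ij})\operatorname{sign}(X_{jk})\operatorname{sign}(X_{ki})=1$ for all $i,j,k$. *)

theory Defs
  imports "Jordan_Normal_Form.Matrix" "Jordan_Normal_Form.DL_Rank" "HOL-Library.Extended_Real"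
    "HOL-Library.Liminf_Limsup"
begin

definition nz_row :: "nat \<Rightarrow> real mat set" where
  "nz_row n = {X \<in> carrier_mat n n. \<forall>i<n. \<exists>j<n. X $$ (i,j) \<noteq> 0}"

definition ones_vec :: "nat \<Rightarrow> real vec" where
  "ones_vec n = vec n (\<lambda>_. 1)"

definition abs_mat :: "real mat \<Rightarrow> real mat" where
  "abs_mat X = map_mat abs X"

definition diag_inv :: "real vec \<Rightarrow> real mat" where
  "diag_inv d = mat (dim_vec d) (dim_vec d) (\<lambda>(i,j). if i = j then inverse (d $ i) else 0)"

definition f_HbM :: "real mat \<Rightarrow> real mat" where
  "f_HbM X = diag_inv (abs_mat X *\<^sub>v ones_vec (dim_row X)) * X * transpose_mat X"

definition traj :: "real mat \<Rightarrow> nat \<Rightarrow> real mat" where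
  "traj X0 t = (f_HbM ^^ t) X0"

definition perm_mat :: "nat \<Rightarrow> (nat \<Rightarrow> nat) \<Rightarrow> real mat" where
  "perm_mat n \<sigma> = mat n n (\<lambda>(i,j). if \<sigma> i = j then 1 else 0)"

definition is_perm_mat :: "nat \<Rightarrow> real mat \<Rightarrow> bool" where
  "is_perm_mat n P \<longleftrightarrow> (\<exists>\<sigma>. \<sigma> permutes {..<n} \<and> P = perm_mat n \<sigma>)"

definition sign_block :: "real \<Rightarrow> real vec \<Rightarrow> real mat" where
  "sign_block \<alpha> b = \<alpha> \<cdot>\<^sub>m (mat_of_cols (dim_vec b) [b] * mat_of_rows (dim_vec b) [b])"

definition valid_block :: "real \<times> real vec \<Rightarrow> bool" where
  "valid_block p \<longleftrightarrow> fst p > 0 \<and> dim_vec (snd p) > 0 \<and>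
      (\<forall>i < dim_vec (snd p). snd p $ i \<in> {-1, 1})"

definition Q_HbM :: "nat \<Rightarrow> real mat set" where
  "Q_HbM n = {X. X \<in> nz_row n \<and>
     (\<exists>P bs. is_perm_mat n P \<and> list_all valid_block bs \<and>
        diag_block_mat (map (\<lambda>(\<alpha>, b). sign_block \<alpha> b) bs) \<in> carrier_mat n n \<and>
        X = P * diag_block_mat (map (\<lambda>(\<alpha>, b). sign_block \<alpha> b) bs) * transpose_mat P)}"

definition mat_rank :: "nat \<Rightarrow> real mat \<Rightarrow> nat" where
  "mat_rank n X = vec_space.rank n X"

definition locally_stable_fp :: "nat \<Rightarrow> (real mat \<Rightarrow> real mat) \<Rightarrow> real mat \<Rightarrow> bool" where
  "locally_stable_fp n f Xs \<longleftrightarrow> f Xs = Xs \<and>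
     (\<forall>\<epsilon>>0. \<exists>\<zeta>>0. \<forall>X0 \<in> carrier_mat n n.
        (\<forall>i<n. \<forall>j<n. \<bar>X0 $$ (i,j) - Xs $$ (i,j)\<bar> < \<zeta>) \<longrightarrow>
        (\<forall>t. \<forall>i<n. \<forall>j<n. \<bar>(f ^^ t) X0 $$ (i,j) - Xs $$ (i,j)\<bar> < \<epsilon>))"

definition social_balance :: "nat \<Rightarrow> real mat \<Rightarrow> bool" where
  "social_balance n X \<longleftrightarrow> (\<forall>i<n. X $$ (i,i) > 0) \<and>
     (\<forall>i<n. \<forall>j<n. \<forall>k<n. sgn (X $$ (i,j)) * sgn (X $$ (j,k)) * sgn (X $$ (k,i)) = 1)"

definition min_abs_entry :: "nat \<Rightarrow> real mat \<Rightarrow> real" where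
  "min_abs_entry n X = Min {\<bar>X $$ (i,j)\<bar> | i j. i < n \<and> j < n}"

end

theory Submission
  imports Defs "Jordan_Normal_Form.DL_Rank_Submatrix"
begin

(* Entrywise, the map reads X'_ij = (sum_k X_ik X_jk) / (sum_k |X_ik|). If the entries of X are nonzero with
   signs c_i c_j for a sign vector c, this sign pattern is preserved and |X| evolves by the same formula;
   then each entry of the next matrix is a weighted average of a row of the current one, with weights
   bounded below uniformly in time, so the largest and smallest entries are monotone and their gap
   contracts geometrically: X(t) tends to alpha c c^T, which are exactly the rank-one elements of Q_HbM.
   Conversely, if all entries stay bounded away from zero, the largest modulus never increases and drops
   by a fixed amount within three steps whenever two rows are misaligned (their entrywise product has
   entries of both signs). Hence eventually no two rows are misaligned, which together with the positive
   diagonal is social balance; and social balance at a single time yields the sign pattern above. *)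

section \<open>Entrywise form of the dynamics\<close>

lemma f_HbM_carrier: "X \<in> carrier_mat n n \<Longrightarrow> f_HbM X \<in> carrier_mat n n"
  unfolding f_HbM_def diag_inv_def abs_mat_def ones_vec_def by auto

lemma funpow_f_HbM_carrier: "X \<in> carrier_mat n n \<Longrightarrow> (f_HbM ^^ t) X \<in> carrier_mat n n"
  by (induction t) (auto intro: f_HbM_carrier)

lemma index_diag_inv_mult:
  assumes A: "A \<in> carrier_mat (dim_vec d) m" and i: "i < dim_vec d" and k: "k < m"
  shows "(diag_inv d * A) $$ (i,k) = A $$ (i,k) / d $ i"
proof -
  have "(diag_inv d * A) $$ (i,k) = (\<Sum>l<dim_vec d. (if i = l then inverse (d $ i) else 0) * A $$ (l,k))"
    using A i k unfolding diag_inv_def by (auto simp: scalar_prod_def lessThan_atLeast0)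
  also have "\<dots> = (\<Sum>l<dim_vec d. if l = i then A $$ (i,k) / d $ i else 0)"
    by (rule sum.cong) (auto simp: divide_inverse)
  also have "\<dots> = A $$ (i,k) / d $ i"
    using i by simp
  finally show ?thesis .
qed

lemma index_f_HbM:
  assumes X: "X \<in> carrier_mat n n" and i: "i < n" and j: "j < n"
  shows "f_HbM X $$ (i,j) = (\<Sum>k<n. X $$ (i,k) * X $$ (j,k)) / (\<Sum>k<n. \<bar>X $$ (i,k)\<bar>)"
proof -
  define d where "d = abs_mat X *\<^sub>v ones_vec n"
  have d: "dim_vec d = n" using X unfolding d_def abs_mat_def ones_vec_def by auto
  have di: "d $ i = (\<Sum>k<n. \<bar>X $$ (i,k)\<bar>)"
    using X i unfolding d_def abs_mat_def ones_vec_def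
    by (auto simp: scalar_prod_def lessThan_atLeast0 intro!: sum.cong)
  have "f_HbM X = diag_inv d * X * transpose_mat X"
    using X unfolding f_HbM_def d_def by simp
  then have "f_HbM X $$ (i,j) = (\<Sum>k<n. (diag_inv d * X) $$ (i,k) * X $$ (j,k))"
    using X i j d by (auto simp: scalar_prod_def lessThan_atLeast0 diag_inv_def intro!: sum.cong)
  also have "\<dots> = (\<Sum>k<n. X $$ (i,k) * X $$ (j,k)) / d $ i"
    using X i d by (simp add: index_diag_inv_mult sum_divide_distrib)
  finally show ?thesis unfolding di .
qed

definition hbm_solution :: "nat \<Rightarrow> (nat \<Rightarrow> nat \<Rightarrow> nat \<Rightarrow> real) \<Rightarrow> bool" where
  "hbm_solution n x \<longleftrightarrow> (\<forall>t i j. i < n \<longrightarrow> j < n \<longrightarrow>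
     x (Suc t) i j = (\<Sum>k<n. x t i k * x t j k) / (\<Sum>k<n. \<bar>x t i k\<bar>))"

lemma hbm_solution_funpow_f_HbM:
  "X \<in> carrier_mat n n \<Longrightarrow> hbm_solution n (\<lambda>t i j. (f_HbM ^^ t) X $$ (i,j))"
  unfolding hbm_solution_def using index_f_HbM[OF funpow_f_HbM_carrier] by simp

section \<open>Positive solutions converge to a constant\<close>

lemma weighted_average_le:
  fixes p q :: "nat \<Rightarrow> real"
  assumes p: "\<forall>k<n. 0 < p k" and q: "\<forall>k<n. q k \<le> U" and k0: "k0 < n"
    and qk0: "q k0 \<le> U - \<delta>" and \<delta>: "0 \<le> \<delta>" and w: "\<forall>k<n. c * (\<Sum>l<n. p l) \<le> p k"
  shows "(\<Sum>k<n. p k * q k) / (\<Sum>k<n. p k) \<le> U - c * \<delta>"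
proof -
  define d where "d = (\<Sum>k<n. p k)"
  have d: "0 < d" unfolding d_def using p k0 by (intro sum_pos2[of _ k0]) (auto simp: less_imp_le)
  have "c * d * \<delta> \<le> p k0 * (U - q k0)"
    using w k0 p qk0 \<delta> unfolding d_def by (intro mult_mono) auto
  also have "\<dots> \<le> (\<Sum>k<n. p k * (U - q k))"
    using k0 p q by (intro member_le_sum[of k0 "{..<n}" "\<lambda>k. p k * (U - q k)"]) auto
  also have "\<dots> = U * d - (\<Sum>k<n. p k * q k)"
    unfolding d_def by (simp add: algebra_simps sum_subtractf sum_distrib_left)
  finally have "(\<Sum>k<n. p k * q k) \<le> (U - c * \<delta>) * d" by (simp add: algebra_simps)
  then show ?thesis using d unfolding d_def by (simp add: divide_le_eq)
qed

lemma weighted_average_ge: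
  fixes p q :: "nat \<Rightarrow> real"
  assumes "\<forall>k<n. 0 < p k" and "\<forall>k<n. L \<le> q k" and "k0 < n"
    and "L + \<delta> \<le> q k0" and "0 \<le> \<delta>" and "\<forall>k<n. c * (\<Sum>l<n. p l) \<le> p k"
  shows "L + c * \<delta> \<le> (\<Sum>k<n. p k * q k) / (\<Sum>k<n. p k)"
proof -
  have "(\<Sum>k<n. p k * - q k) / (\<Sum>k<n. p k) \<le> - L - c * \<delta>"
    using assms by (intro weighted_average_le[of n p "\<lambda>k. - q k" "- L" k0 \<delta> c]) auto
  then show ?thesis by (simp add: sum_negf)
qed

definition grid_max :: "nat \<Rightarrow> (nat \<Rightarrow> nat \<Rightarrow> real) \<Rightarrow> real" where
  "grid_max n b = Max ((\<lambda>(i,j). b i j) ` ({..<n} \<times> {..<n}))"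

definition grid_min :: "nat \<Rightarrow> (nat \<Rightarrow> nat \<Rightarrow> real) \<Rightarrow> real" where
  "grid_min n b = Min ((\<lambda>(i,j). b i j) ` ({..<n} \<times> {..<n}))"

lemma grid_max_ge: "i < n \<Longrightarrow> j < n \<Longrightarrow> b i j \<le> grid_max n b"
  unfolding grid_max_def by (rule Max_ge) force+

lemma grid_min_le: "i < n \<Longrightarrow> j < n \<Longrightarrow> grid_min n b \<le> b i j"
  unfolding grid_min_def by (rule Min_le) force+

lemma grid_max_le: "0 < n \<Longrightarrow> (\<And>i j. i < n \<Longrightarrow> j < n \<Longrightarrow> b i j \<le> U) \<Longrightarrow> grid_max n b \<le> U"
  unfolding grid_max_def by (subst Max_le_iff) auto

lemma grid_min_ge: "0 < n \<Longrightarrow> (\<And>i j. i < n \<Longrightarrow> j < n \<Longrightarrow> L \<le> b i j) \<Longrightarrow> L \<le> grid_min n b"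
  unfolding grid_min_def by (subst Min_ge_iff) auto

lemma grid_max_attained: "0 < n \<Longrightarrow> \<exists>i<n. \<exists>j<n. b i j = grid_max n b"
proof -
  assume "0 < n"
  then have "grid_max n b \<in> (\<lambda>(i,j). b i j) ` ({..<n} \<times> {..<n})"
    unfolding grid_max_def by (intro Max_in) auto
  then show ?thesis by force
qed

lemma grid_min_attained: "0 < n \<Longrightarrow> \<exists>i<n. \<exists>j<n. b i j = grid_min n b"
proof -
  assume "0 < n"
  then have "grid_min n b \<in> (\<lambda>(i,j). b i j) ` ({..<n} \<times> {..<n})"
    unfolding grid_min_def by (intro Min_in) auto
  then show ?thesis by force
qed

definition positive_hbm_solution :: "nat \<Rightarrow> (nat \<Rightarrow> nat \<Rightarrow> nat \<Rightarrow> real) \<Rightarrow> bool" where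
  "positive_hbm_solution n a \<longleftrightarrow> (\<forall>t i j. i < n \<longrightarrow> j < n \<longrightarrow> 0 < a t i j) \<and>
     (\<forall>t i j. i < n \<longrightarrow> j < n \<longrightarrow> a (Suc t) i j = (\<Sum>k<n. a t i k * a t j k) / (\<Sum>k<n. a t i k))"

lemma positive_hbm_solution_pos: "positive_hbm_solution n a \<Longrightarrow> i < n \<Longrightarrow> j < n \<Longrightarrow> 0 < a t i j"
  unfolding positive_hbm_solution_def by blast

lemma positive_hbm_solution_Suc:
  "positive_hbm_solution n a \<Longrightarrow> i < n \<Longrightarrow> j < n \<Longrightarrow>
     a (Suc t) i j = (\<Sum>k<n. a t i k * a t j k) / (\<Sum>k<n. a t i k)"
  unfolding positive_hbm_solution_def by blast

lemma positive_hbm_Suc_bounds: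
  assumes a: "positive_hbm_solution n a" and i: "i < n" and j: "j < n"
    and b: "\<forall>k<n. L \<le> a t j k \<and> a t j k \<le> U"
  shows "L \<le> a (Suc t) i j \<and> a (Suc t) i j \<le> U"
proof -
  have pos: "\<forall>k<n. 0 < a t i k" using positive_hbm_solution_pos[OF a i] by blast
  have "(\<Sum>k<n. a t i k * a t j k) / (\<Sum>k<n. a t i k) \<le> U - 0 * 0"
    using b i pos by (intro weighted_average_le[of n _ _ U i]) auto
  moreover have "L + 0 * 0 \<le> (\<Sum>k<n. a t i k * a t j k) / (\<Sum>k<n. a t i k)"
    using b i pos by (intro weighted_average_ge[of n _ L _ i]) auto
  ultimately show ?thesis using positive_hbm_solution_Suc[OF a i j] by simp
qed

lemma positive_hbm_bounds:
  assumes a: "positive_hbm_solution n a" and b: "\<forall>i<n. \<forall>j<n. L \<le> a 0 i j \<and> a 0 i j \<le> U"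
  shows "\<forall>i<n. \<forall>j<n. L \<le> a t i j \<and> a t i j \<le> U"
proof (induction t)
  case 0 then show ?case using b by auto
next
  case (Suc t) then show ?case using positive_hbm_Suc_bounds[OF a] by blast
qed

lemma positive_hbm_grid_bounds_Suc:
  assumes a: "positive_hbm_solution n a" and i: "i < n" and j: "j < n"
  shows "grid_min n (a t) \<le> a (Suc t) i j \<and> a (Suc t) i j \<le> grid_max n (a t)"
  using j by (intro positive_hbm_Suc_bounds[OF a i j]) (simp add: grid_min_le grid_max_ge)

lemma positive_hbm_grid_max_Suc_le:
  "positive_hbm_solution n a \<Longrightarrow> 0 < n \<Longrightarrow> grid_max n (a (Suc t)) \<le> grid_max n (a t)"
  using positive_hbm_grid_bounds_Suc by (intro grid_max_le) blast+

lemma positive_hbm_grid_min_Suc_ge: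
  "positive_hbm_solution n a \<Longrightarrow> 0 < n \<Longrightarrow> grid_min n (a t) \<le> grid_min n (a (Suc t))"
  using positive_hbm_grid_bounds_Suc by (intro grid_min_ge) blast+

lemma positive_hbm_weights_bounded_below:
  assumes a: "positive_hbm_solution n a" and n: "0 < n"
  obtains c where "0 < c" "\<And>t i k. i < n \<Longrightarrow> k < n \<Longrightarrow> c * (\<Sum>l<n. a t i l) \<le> a t i k"
proof -
  define m where "m = grid_min n (a 0)"
  define M where "M = grid_max n (a 0)"
  have bounds: "m \<le> a t i j \<and> a t i j \<le> M" if "i < n" "j < n" for t i j
    using positive_hbm_bounds[OF a, of m M] grid_min_le grid_max_ge that unfolding m_def M_def by blast
  obtain i j where "i < n" "j < n" "a 0 i j = m"
    using grid_min_attained[OF n, of "a 0"] unfolding m_def by blast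
  then have m: "0 < m" using positive_hbm_solution_pos[OF a] by metis
  have M: "0 < M" using bounds[of 0 0 0] m n by linarith
  show thesis
  proof (rule that[of "m / (n * M)"])
    show "0 < m / (n * M)" using m M n by simp
    fix t i k assume i: "i < n" and k: "k < n"
    have "(\<Sum>l<n. a t i l) \<le> n * M"
      using sum_bounded_above[of "{..<n}" "a t i" M] bounds i by auto
    then have "m / (n * M) * (\<Sum>l<n. a t i l) \<le> m"
      using m M n by (simp add: divide_le_eq mult.commute mult_left_mono)
    then show "m / (n * M) * (\<Sum>l<n. a t i l) \<le> a t i k" using bounds[OF i k, of t] by linarith
  qed
qed

lemma positive_hbm_spread_contracts:
  assumes a: "positive_hbm_solution n a" and n: "0 < n" and c: "0 \<le> c"
    and w: "\<And>t i k. i < n \<Longrightarrow> k < n \<Longrightarrow> c * (\<Sum>l<n. a t i l) \<le> a t i k"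
  shows "grid_max n (a (Suc (Suc t))) - grid_min n (a (Suc (Suc t)))
    \<le> (1 - 2 * c^2) * (grid_max n (a t) - grid_min n (a t))"
proof -
  define U where "U = grid_max n (a t)"
  define L where "L = grid_min n (a t)"
  have b0: "\<forall>i<n. \<forall>j<n. L \<le> a t i j \<and> a t i j \<le> U"
    unfolding U_def L_def using grid_max_ge grid_min_le by blast
  have b1: "\<forall>i<n. \<forall>j<n. L \<le> a (Suc t) i j \<and> a (Suc t) i j \<le> U"
    using positive_hbm_Suc_bounds[OF a] b0 by blast
  have LU: "L \<le> U" using b0 n by force
  obtain k0 l0 where k0: "k0 < n" "l0 < n" "a t k0 l0 = L"
    using grid_min_attained[OF n] unfolding L_def by blast
  obtain k1 l1 where k1: "k1 < n" "l1 < n" "a t k1 l1 = U"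
    using grid_max_attained[OF n] unfolding U_def by blast
  note pos = positive_hbm_solution_pos[OF a] and rec = positive_hbm_solution_Suc[OF a]
  \<comment> \<open>The minimum in row k0 pulls column k0 of a (Suc t) below U, and that column pulls every
      entry of a (Suc (Suc t)) below U; symmetrically for the maximum.\<close>
  have up1: "a (Suc t) j k0 \<le> U - c * (U - L)" if j: "j < n" for j
    unfolding rec[OF j k0(1)] using pos j b0 k0 LU w by (intro weighted_average_le[of n _ _ U l0]) auto
  have lo1: "L + c * (U - L) \<le> a (Suc t) j k1" if j: "j < n" for j
    unfolding rec[OF j k1(1)] using pos j b0 k1 LU w by (intro weighted_average_ge[of n _ L _ l1]) auto
  have up2: "a (Suc (Suc t)) i j \<le> U - c * (c * (U - L))" if i: "i < n" and j: "j < n" for i j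
    unfolding rec[OF i j] using pos i j b1 k0 LU w c up1[OF j]
    by (intro weighted_average_le[of n _ _ U k0]) auto
  have lo2: "L + c * (c * (U - L)) \<le> a (Suc (Suc t)) i j" if i: "i < n" and j: "j < n" for i j
    unfolding rec[OF i j] using pos i j b1 k1 LU w c lo1[OF j]
    by (intro weighted_average_ge[of n _ L _ k1]) auto
  have "grid_max n (a (Suc (Suc t))) \<le> U - c * (c * (U - L))" using up2 n by (intro grid_max_le) auto
  moreover have "L + c * (c * (U - L)) \<le> grid_min n (a (Suc (Suc t)))" using lo2 n by (intro grid_min_ge) auto
  ultimately show ?thesis unfolding U_def[symmetric] L_def[symmetric]
    by (simp add: power2_eq_square algebra_simps)
qed

lemma positive_hbm_spread_geometric:
  assumes a: "positive_hbm_solution n a" and n: "0 < n" and c: "0 \<le> c"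
    and w: "\<And>t i k. i < n \<Longrightarrow> k < n \<Longrightarrow> c * (\<Sum>l<n. a t i l) \<le> a t i k"
  shows "grid_max n (a (2*k)) - grid_min n (a (2*k))
    \<le> (max 0 (1 - 2 * c^2))^k * (grid_max n (a 0) - grid_min n (a 0))"
proof (induction k)
  case 0 then show ?case by simp
next
  case (Suc k)
  define r where "r = max 0 (1 - 2 * c^2)"
  define D where "D k = grid_max n (a (2*k)) - grid_min n (a (2*k))" for k
  have "grid_min n (a (2*k)) \<le> grid_max n (a (2*k))"
    using grid_min_le[OF n n] grid_max_ge[OF n n] by (rule order_trans)
  then have "(1 - 2 * c^2) * D k \<le> r * D k"
    unfolding r_def D_def by (intro mult_right_mono) auto
  then have "D (Suc k) \<le> r * D k"
    using positive_hbm_spread_contracts[OF a n c w, of "2*k"] unfolding D_def by simp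
  also have "\<dots> \<le> r * (r^k * D 0)"
    using Suc unfolding r_def D_def by (intro mult_left_mono) auto
  finally have "D (Suc k) \<le> r^Suc k * D 0" by simp
  then show ?case unfolding r_def D_def by simp
qed

lemma positive_hbm_converges:
  assumes a: "positive_hbm_solution n a" and n: "0 < n"
  obtains L where "0 < L" "\<And>i j. i < n \<Longrightarrow> j < n \<Longrightarrow> (\<lambda>t. a t i j) \<longlonglongrightarrow> L"
proof -
  obtain c where c: "0 < c" and w: "\<And>t i k. i < n \<Longrightarrow> k < n \<Longrightarrow> c * (\<Sum>l<n. a t i l) \<le> a t i k"
    using positive_hbm_weights_bounded_below[OF a n] by blast
  define M where "M t = grid_max n (a t)" for t
  define m where "m t = grid_min n (a t)" for t
  have between: "m t \<le> a t i j \<and> a t i j \<le> M t" if "i < n" "j < n" for t i j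
    unfolding M_def m_def using grid_max_ge grid_min_le that by blast
  have decM: "decseq M" unfolding M_def using positive_hbm_grid_max_Suc_le[OF a n] by (rule decseq_SucI)
  have incm: "incseq m" unfolding m_def using positive_hbm_grid_min_Suc_ge[OF a n] by (rule incseq_SucI)
  have mM: "m t \<le> M t" for t using between[OF n n, of t] by linarith
  have "\<forall>t. m 0 \<le> M t" using incseqD[OF incm] mM by (meson le0 order_trans)
  with decM obtain LM where LM: "M \<longlonglongrightarrow> LM" "\<forall>t. LM \<le> M t" by (rule decseq_convergent)
  have "\<forall>t. m t \<le> M 0" using decseqD[OF decM] mM by (meson le0 order_trans)
  with incm obtain Lm where Lm: "m \<longlonglongrightarrow> Lm" "\<forall>t. m t \<le> Lm" by (rule incseq_convergent)
  define r where "r = max 0 (1 - 2 * c^2)"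
  have r: "0 \<le> r" "r < 1" unfolding r_def using c by auto
  have "(\<lambda>k. r^k * (M 0 - m 0)) \<longlonglongrightarrow> 0 * (M 0 - m 0)"
    using r by (intro tendsto_intros) auto
  moreover have "LM - Lm \<le> r^k * (M 0 - m 0)" for k
    using LM(2)[rule_format, of "2*k"] Lm(2)[rule_format, of "2*k"]
      positive_hbm_spread_geometric[OF a n less_imp_le[OF c] w, of k]
    unfolding M_def m_def r_def by linarith
  ultimately have "LM - Lm \<le> 0 * (M 0 - m 0)" by (intro LIMSEQ_le[OF tendsto_const]) auto
  moreover have "Lm \<le> LM" using LIMSEQ_le[OF Lm(1) LM(1)] mM by auto
  ultimately have LM_eq: "LM = Lm" by simp
  show thesis
  proof (rule that)
    obtain i j where "i < n" "j < n" "a 0 i j = m 0"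
      using grid_min_attained[OF n] unfolding m_def by blast
    then show "0 < Lm" using Lm(2) positive_hbm_solution_pos[OF a] by (metis less_le_trans)
    fix i j assume "i < n" "j < n"
    then show "(\<lambda>t. a t i j) \<longlonglongrightarrow> Lm"
      using between by (intro tendsto_sandwich[OF _ _ Lm(1) LM(1)[unfolded LM_eq]]) auto
  qed
qed

section \<open>Sign-balanced solutions\<close>

definition sign_vector :: "nat \<Rightarrow> (nat \<Rightarrow> real) \<Rightarrow> bool" where
  "sign_vector n c \<longleftrightarrow> (\<forall>i<n. c i = 1 \<or> c i = -1)"

definition balanced_by :: "nat \<Rightarrow> (nat \<Rightarrow> real) \<Rightarrow> (nat \<Rightarrow> nat \<Rightarrow> real) \<Rightarrow> bool" where
  "balanced_by n c b \<longleftrightarrow> (\<forall>i<n. \<forall>j<n. b i j \<noteq> 0 \<and> b i j = c i * c j * \<bar>b i j\<bar>)"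

lemma sign_vector_mult_self: "sign_vector n c \<Longrightarrow> i < n \<Longrightarrow> c i * c i = 1"
  unfolding sign_vector_def by auto

lemma sign_vector_abs_mult: "sign_vector n c \<Longrightarrow> i < n \<Longrightarrow> j < n \<Longrightarrow> \<bar>c i * c j\<bar> = 1"
  unfolding sign_vector_def abs_mult by (metis abs_minus_cancel abs_one mult_1)

lemma hbm_balanced_by_Suc:
  assumes x: "hbm_solution n x" and c: "sign_vector n c" and bal: "balanced_by n c (x t)"
    and i: "i < n" and j: "j < n"
  shows "x (Suc t) i j = c i * c j * ((\<Sum>k<n. \<bar>x t i k\<bar> * \<bar>x t j k\<bar>) / (\<Sum>k<n. \<bar>x t i k\<bar>))"
    and "0 < (\<Sum>k<n. \<bar>x t i k\<bar> * \<bar>x t j k\<bar>) / (\<Sum>k<n. \<bar>x t i k\<bar>)"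
proof -
  have "x t i k * x t j k = c i * c j * (\<bar>x t i k\<bar> * \<bar>x t j k\<bar>)" if k: "k < n" for k
  proof -
    have "x t i k * x t j k = (c i * c k * \<bar>x t i k\<bar>) * (c j * c k * \<bar>x t j k\<bar>)"
      using bal i j k unfolding balanced_by_def by metis
    also have "\<dots> = c i * c j * (c k * c k) * (\<bar>x t i k\<bar> * \<bar>x t j k\<bar>)" by (simp add: algebra_simps)
    finally show ?thesis using sign_vector_mult_self[OF c k] by simp
  qed
  then have "(\<Sum>k<n. x t i k * x t j k) = c i * c j * (\<Sum>k<n. \<bar>x t i k\<bar> * \<bar>x t j k\<bar>)"
    by (simp add: sum_distrib_left)
  then show "x (Suc t) i j = c i * c j * ((\<Sum>k<n. \<bar>x t i k\<bar> * \<bar>x t j k\<bar>) / (\<Sum>k<n. \<bar>x t i k\<bar>))"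
    using x i j unfolding hbm_solution_def by simp
  have "0 < (\<Sum>k<n. \<bar>x t i k\<bar> * \<bar>x t j k\<bar>)" "0 < (\<Sum>k<n. \<bar>x t i k\<bar>)"
    using bal i j unfolding balanced_by_def by (auto intro!: sum_pos2[of _ i])
  then show "0 < (\<Sum>k<n. \<bar>x t i k\<bar> * \<bar>x t j k\<bar>) / (\<Sum>k<n. \<bar>x t i k\<bar>)" by simp
qed

lemma hbm_abs_Suc_of_balanced_by:
  assumes x: "hbm_solution n x" and c: "sign_vector n c" and bal: "balanced_by n c (x t)"
    and i: "i < n" and j: "j < n"
  shows "\<bar>x (Suc t) i j\<bar> = (\<Sum>k<n. \<bar>x t i k\<bar> * \<bar>x t j k\<bar>) / (\<Sum>k<n. \<bar>x t i k\<bar>)"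
  unfolding hbm_balanced_by_Suc(1)[OF assms] abs_mult[of "c i * c j"] sign_vector_abs_mult[OF c i j]
  using abs_of_pos[OF hbm_balanced_by_Suc(2)[OF assms]] by simp

lemma hbm_balanced_by_invariant:
  assumes x: "hbm_solution n x" and c: "sign_vector n c" and bal: "balanced_by n c (x 0)"
  shows "balanced_by n c (x t)"
proof (induction t)
  case 0 then show ?case using bal .
next
  case (Suc t)
  show ?case unfolding balanced_by_def
  proof (intro allI impI)
    fix i j assume i: "i < n" and j: "j < n"
    show "x (Suc t) i j \<noteq> 0 \<and> x (Suc t) i j = c i * c j * \<bar>x (Suc t) i j\<bar>"
      using hbm_balanced_by_Suc[OF x c Suc i j] hbm_abs_Suc_of_balanced_by[OF x c Suc i j]
        sign_vector_abs_mult[OF c i j] by auto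
  qed
qed

lemma positive_hbm_solution_abs:
  assumes x: "hbm_solution n x" and c: "sign_vector n c" and bal: "balanced_by n c (x 0)"
  shows "positive_hbm_solution n (\<lambda>t i j. \<bar>x t i j\<bar>)"
  using hbm_balanced_by_invariant[OF assms] hbm_abs_Suc_of_balanced_by[OF x c]
  unfolding positive_hbm_solution_def balanced_by_def by simp

section \<open>Solutions bounded away from zero become aligned\<close>

lemma hbm_abs_Suc_le:
  assumes x: "hbm_solution n x" and i: "i < n" and j: "j < n"
  shows "\<bar>x (Suc t) i j\<bar> \<le> (\<Sum>k<n. \<bar>x t i k\<bar> * \<bar>x t j k\<bar>) / (\<Sum>k<n. \<bar>x t i k\<bar>)"
proof -
  have "\<bar>\<Sum>k<n. x t i k * x t j k\<bar> \<le> (\<Sum>k<n. \<bar>x t i k\<bar> * \<bar>x t j k\<bar>)"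
    using sum_abs[of "\<lambda>k. x t i k * x t j k" "{..<n}"] by (simp add: abs_mult)
  then show ?thesis using x i j unfolding hbm_solution_def
    by (simp add: abs_divide divide_right_mono sum_nonneg)
qed

lemma abs_sum_le_sum_abs_minus:
  fixes s :: "nat \<Rightarrow> real"
  assumes l: "l < n" and l': "l' < n" and sl: "e \<le> s l" and sl': "s l' \<le> - e"
  shows "\<bar>\<Sum>k<n. s k\<bar> \<le> (\<Sum>k<n. \<bar>s k\<bar>) - 2 * e"
proof -
  have "\<bar>s l'\<bar> - s l' \<le> (\<Sum>k<n. \<bar>s k\<bar> - s k)"
    using l' by (intro member_le_sum[of l' "{..<n}" "\<lambda>k. \<bar>s k\<bar> - s k"]) auto
  moreover have "\<bar>s l\<bar> + s l \<le> (\<Sum>k<n. \<bar>s k\<bar> + s k)"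
    using l by (intro member_le_sum[of l "{..<n}" "\<lambda>k. \<bar>s k\<bar> + s k"]) auto
  ultimately show ?thesis using sl sl' abs_ge_self[of "s l"] abs_ge_minus_self[of "s l'"]
    unfolding sum_subtractf sum.distrib abs_le_iff by linarith
qed

definition misaligned :: "nat \<Rightarrow> (nat \<Rightarrow> nat \<Rightarrow> real) \<Rightarrow> bool" where
  "misaligned n b \<longleftrightarrow> (\<exists>j<n. \<exists>k<n. \<exists>l<n. \<exists>l'<n. b j l * b k l > 0 \<and> b j l' * b k l' < 0)"

locale hbm_bounded_below =
  fixes n :: nat and x :: "nat \<Rightarrow> nat \<Rightarrow> nat \<Rightarrow> real" and \<epsilon> :: real and T :: nat
  assumes solution: "hbm_solution n x" and n: "0 < n" and \<epsilon>: "0 < \<epsilon>"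
    and bounded_below: "\<And>t i j. T \<le> t \<Longrightarrow> i < n \<Longrightarrow> j < n \<Longrightarrow> \<epsilon> \<le> \<bar>x t i j\<bar>"
begin

definition max_abs :: "nat \<Rightarrow> real" where
  "max_abs t = grid_max n (\<lambda>i j. \<bar>x t i j\<bar>)"

lemma abs_le_max_abs: "i < n \<Longrightarrow> j < n \<Longrightarrow> \<bar>x t i j\<bar> \<le> max_abs t"
  unfolding max_abs_def by (rule grid_max_ge)

lemma abs_pos: "T \<le> t \<Longrightarrow> i < n \<Longrightarrow> j < n \<Longrightarrow> 0 < \<bar>x t i j\<bar>"
  using bounded_below \<epsilon> by (meson less_le_trans)

lemma row_abs_sum_pos: "T \<le> t \<Longrightarrow> i < n \<Longrightarrow> 0 < (\<Sum>k<n. \<bar>x t i k\<bar>)"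
  using abs_pos by (intro sum_pos2[of _ i]) auto

lemma abs_Suc_le:
  assumes t: "T \<le> t" and i: "i < n" and j: "j < n"
    and q: "\<forall>k<n. \<bar>x t j k\<bar> \<le> U" and k0: "k0 < n" and qk0: "\<bar>x t j k0\<bar> \<le> U - \<delta>" and \<delta>: "0 \<le> \<delta>"
    and w: "\<forall>k<n. c * (\<Sum>l<n. \<bar>x t i l\<bar>) \<le> \<bar>x t i k\<bar>"
  shows "\<bar>x (Suc t) i j\<bar> \<le> U - c * \<delta>"
proof -
  have "(\<Sum>k<n. \<bar>x t i k\<bar> * \<bar>x t j k\<bar>) / (\<Sum>k<n. \<bar>x t i k\<bar>) \<le> U - c * \<delta>"
    using abs_pos[OF t i] q k0 qk0 \<delta> w by (intro weighted_average_le[of n _ _ U k0]) auto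
  then show ?thesis using hbm_abs_Suc_le[OF solution i j, of t] by linarith
qed

lemma max_abs_Suc_le: "T \<le> t \<Longrightarrow> max_abs (Suc t) \<le> max_abs t"
  unfolding max_abs_def[of "Suc t"]
proof (intro grid_max_le[OF n])
  fix i j assume t: "T \<le> t" and i: "i < n" and j: "j < n"
  have q: "\<forall>k<n. \<bar>x t j k\<bar> \<le> max_abs t" using abs_le_max_abs[OF j] by blast
  show "\<bar>x (Suc t) i j\<bar> \<le> max_abs t" using abs_Suc_le[OF t i j q n, of 0 0] q n by simp
qed

lemma max_abs_mono:
  assumes "T \<le> s" and "s \<le> t"
  shows "max_abs t \<le> max_abs s"
  using assms(2)
proof (induction t rule: dec_induct)
  case base then show ?case by simp
next
  case (step t) then show ?case using max_abs_Suc_le[of t] assms(1) by simp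
qed

lemma \<epsilon>_le_max_abs: "T \<le> t \<Longrightarrow> \<epsilon> \<le> max_abs t"
  using bounded_below[of t 0 0] abs_le_max_abs[of 0 0 t] n by auto

(* weight_floor bounds every weight |x t i k| / (sum_l |x t i l|) from below after time T;
   cancellation_gap is the loss 2 eps^2 / (row sum) caused by cancellation in a misaligned pair of rows. *)
definition weight_floor :: real where "weight_floor = \<epsilon> / (n * max_abs T)"

definition cancellation_gap :: real where "cancellation_gap = 2 * \<epsilon>^2 / (n * max_abs T)"

lemma max_abs_T_pos: "0 < max_abs T"
  using \<epsilon>_le_max_abs[of T] \<epsilon> by simp

lemma weight_floor_pos: "0 < weight_floor"
  unfolding weight_floor_def using max_abs_T_pos \<epsilon> n by simp

lemma cancellation_gap_pos: "0 < cancellation_gap"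
  unfolding cancellation_gap_def using max_abs_T_pos \<epsilon> n by simp

lemma row_abs_sum_le:
  assumes t: "T \<le> t" and i: "i < n"
  shows "(\<Sum>l<n. \<bar>x t i l\<bar>) \<le> n * max_abs T"
proof -
  have "\<bar>x t i l\<bar> \<le> max_abs T" if "l < n" for l
    using abs_le_max_abs[OF i that, of t] max_abs_mono[OF order_refl t] by linarith
  then show ?thesis using sum_bounded_above[of "{..<n}" "\<lambda>l. \<bar>x t i l\<bar>" "max_abs T"] by simp
qed

lemma weight_floor_le:
  assumes t: "T \<le> t" and i: "i < n" and k: "k < n"
  shows "weight_floor * (\<Sum>l<n. \<bar>x t i l\<bar>) \<le> \<bar>x t i k\<bar>"
proof -
  have "weight_floor * (\<Sum>l<n. \<bar>x t i l\<bar>) \<le> weight_floor * (n * max_abs T)"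
    using row_abs_sum_le[OF t i] weight_floor_pos by (intro mult_left_mono) auto
  also have "\<dots> = \<epsilon>" unfolding weight_floor_def using max_abs_T_pos n by simp
  finally show ?thesis using bounded_below[OF t i k] by linarith
qed

lemma misaligned_Suc_gap:
  assumes t: "T \<le> t" and j: "j < n" and k: "k < n" and l: "l < n" and l': "l' < n"
    and pos: "x t j l * x t k l > 0" and neg: "x t j l' * x t k l' < 0"
  shows "\<bar>x (Suc t) j k\<bar> \<le> max_abs t - cancellation_gap"
proof -
  define d where "d = (\<Sum>i<n. \<bar>x t j i\<bar>)"
  have d: "0 < d" "d \<le> n * max_abs T"
    unfolding d_def using row_abs_sum_pos[OF t j] row_abs_sum_le[OF t j] by auto
  have \<epsilon>2: "\<epsilon>^2 \<le> \<bar>x t j i\<bar> * \<bar>x t k i\<bar>" if "i < n" for i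
    using bounded_below[OF t j that] bounded_below[OF t k that] \<epsilon> unfolding power2_eq_square
    by (intro mult_mono) auto
  have "\<bar>\<Sum>i<n. x t j i * x t k i\<bar> \<le> (\<Sum>i<n. \<bar>x t j i * x t k i\<bar>) - 2 * \<epsilon>^2"
    using \<epsilon>2[OF l] \<epsilon>2[OF l'] pos neg
    by (intro abs_sum_le_sum_abs_minus[OF l l']) (auto simp: abs_mult[symmetric])
  moreover have "x (Suc t) j k = (\<Sum>i<n. x t j i * x t k i) / d"
    using solution j k unfolding hbm_solution_def d_def by blast
  ultimately have "\<bar>x (Suc t) j k\<bar> \<le> ((\<Sum>i<n. \<bar>x t j i\<bar> * \<bar>x t k i\<bar>) - 2 * \<epsilon>^2) / d"
    using d(1) by (simp add: abs_divide abs_mult divide_right_mono)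
  then have "\<bar>x (Suc t) j k\<bar> \<le> (\<Sum>i<n. \<bar>x t j i\<bar> * \<bar>x t k i\<bar>) / d - 2 * \<epsilon>^2 / d"
    by (simp add: diff_divide_distrib)
  moreover have "(\<Sum>i<n. \<bar>x t j i\<bar> * \<bar>x t k i\<bar>) / d \<le> max_abs t - 0 * 0"
    unfolding d_def using abs_pos[OF t j] abs_le_max_abs[OF k] j
    by (intro weighted_average_le[of n _ _ _ j]) auto
  moreover have "cancellation_gap \<le> 2 * \<epsilon>^2 / d"
    unfolding cancellation_gap_def using d \<epsilon> by (intro divide_left_mono) auto
  ultimately show ?thesis by linarith
qed

(* The deficit at entry (j,k) passes to column j one step later and to every entry one step after
   that, each time scaled by the weight floor. *)
lemma misaligned_max_abs_drop:
  assumes t: "T \<le> t" and mis: "misaligned n (x t)"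
  shows "max_abs (t + 3) \<le> max_abs t - weight_floor * (weight_floor * cancellation_gap)"
proof -
  obtain j k l l' where jk: "j < n" "k < n" "l < n" "l' < n"
    and pos: "x t j l * x t k l > 0" and neg: "x t j l' * x t k l' < 0"
    using mis unfolding misaligned_def by blast
  define M where "M = max_abs t"
  have t1: "T \<le> Suc t" and t2: "T \<le> Suc (Suc t)" using t by auto
  have bound: "\<forall>k<n. \<bar>x s i k\<bar> \<le> M" if "t \<le> s" "i < n" for s i
    using abs_le_max_abs[OF that(2)] max_abs_mono[OF t that(1)] unfolding M_def by (meson order_trans)
  have s1: "\<bar>x (Suc t) j k\<bar> \<le> M - cancellation_gap"
    unfolding M_def using misaligned_Suc_gap[OF t jk pos neg] .
  have s2: "\<bar>x (Suc (Suc t)) a j\<bar> \<le> M - weight_floor * cancellation_gap" if a: "a < n" for a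
    using abs_Suc_le[OF t1 a jk(1) bound[OF _ jk(1)] jk(2) s1] cancellation_gap_pos weight_floor_le[OF t1 a]
    by auto
  have s3: "\<bar>x (Suc (Suc (Suc t))) a b\<bar> \<le> M - weight_floor * (weight_floor * cancellation_gap)"
    if a: "a < n" and b: "b < n" for a b
    using abs_Suc_le[OF t2 a b bound[OF _ b] jk(1) s2[OF b]] weight_floor_pos cancellation_gap_pos
      weight_floor_le[OF t2 a] by auto
  show ?thesis unfolding max_abs_def[of "t+3"] M_def[symmetric]
    using s3 n by (intro grid_max_le) (auto simp: numeral_3_eq_3)
qed

lemma eventually_not_misaligned: "\<exists>t1. \<forall>t\<ge>t1. \<not> misaligned n (x t)"
proof (rule ccontr)
  assume "\<not> ?thesis"
  then have often: "\<exists>s\<ge>t. misaligned n (x s)" for t by blast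
  define D where "D = weight_floor * (weight_floor * cancellation_gap)"
  have D: "0 < D" unfolding D_def using weight_floor_pos cancellation_gap_pos by simp
  have drop: "\<exists>t\<ge>T. max_abs t \<le> max_abs T - real m * D" for m
  proof (induction m)
    case 0 then show ?case by auto
  next
    case (Suc m)
    then obtain t where t: "T \<le> t" "max_abs t \<le> max_abs T - real m * D" by blast
    obtain s where s: "t \<le> s" "misaligned n (x s)" using often by blast
    have "max_abs (s + 3) \<le> max_abs s - D"
      using misaligned_max_abs_drop[of s] s t unfolding D_def by auto
    moreover have "max_abs s \<le> max_abs t" using max_abs_mono[OF t(1) s(1)] .
    ultimately show ?case using t s by (intro exI[of _ "s + 3"]) (auto simp: algebra_simps)
  qed
  obtain m :: nat where "max_abs T / D < real m" using reals_Archimedean2 by blast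
  then have "max_abs T < real m * D" using D by (simp add: divide_less_eq)
  then show False using drop[of m] \<epsilon>_le_max_abs \<epsilon> by fastforce
qed

lemma diag_pos_Suc:
  assumes t: "T \<le> t" and i: "i < n"
  shows "0 < x (Suc t) i i"
proof -
  have "0 < (\<Sum>k<n. x t i k * x t i k)"
    using abs_pos[OF t i i] i by (intro sum_pos2[of _ i]) (auto simp: zero_less_mult_iff linorder_neq_iff)
  then show ?thesis
    using solution row_abs_sum_pos[OF t i] i unfolding hbm_solution_def by simp
qed

lemma sgn_Suc_sym:
  assumes t: "T \<le> t" and i: "i < n" and j: "j < n"
  shows "sgn (x (Suc t) i j) = sgn (x (Suc t) j i)"
  using solution row_abs_sum_pos[OF t i] row_abs_sum_pos[OF t j] i j unfolding hbm_solution_def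
  by (simp add: sgn_divide mult.commute)

lemma sgn_triangle_Suc:
  assumes t: "T \<le> t" and aligned: "\<not> misaligned n (x (Suc t))"
    and i: "i < n" and j: "j < n" and k: "k < n"
  shows "sgn (x (Suc t) i j) * sgn (x (Suc t) j k) * sgn (x (Suc t) k i) = 1"
proof -
  define b where "b = x (Suc t)"
  have nz: "b u v \<noteq> 0" if "u < n" "v < n" for u v
    unfolding b_def using abs_pos[of "Suc t"] t that by fastforce
  have "\<not> (b i j * b k j > 0 \<and> b i k * b k k < 0)" "\<not> (b i k * b k k > 0 \<and> b i j * b k j < 0)"
    using aligned i j k unfolding misaligned_def b_def by blast+
  then have "sgn (b i j * b k j) = sgn (b i k * b k k)"
    using nz[OF i j] nz[OF k j] nz[OF i k] nz[OF k k]
    by (auto simp: sgn_if mult_less_0_iff zero_less_mult_iff linorder_neq_iff)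
  then have "sgn (b i j) * sgn (b k j) = sgn (b i k)"
    using diag_pos_Suc[OF t k] unfolding b_def sgn_mult by simp
  moreover have "sgn (b j k) = sgn (b k j)" "sgn (b k i) = sgn (b i k)"
    unfolding b_def using sgn_Suc_sym[OF t] i j k by auto
  moreover have "sgn (b i k) * sgn (b i k) = 1" using nz[OF i k] by (auto simp: sgn_if)
  ultimately show ?thesis unfolding b_def[symmetric] by (metis mult.commute mult.left_commute)
qed

end

section \<open>Rank-one elements of Q_HbM\<close>

lemma sign_block_carrier: "sign_block \<alpha> b \<in> carrier_mat (dim_vec b) (dim_vec b)"
  unfolding sign_block_def by auto

lemma index_sign_block:
  "k < dim_vec b \<Longrightarrow> l < dim_vec b \<Longrightarrow> sign_block \<alpha> b $$ (k,l) = \<alpha> * (b $ k * b $ l)"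
  unfolding sign_block_def mat_of_cols_def mat_of_rows_def by (simp add: scalar_prod_def)

lemma index_perm_mat_conj:
  assumes \<sigma>: "\<sigma> permutes {..<n}" and B: "B \<in> carrier_mat n n" and i: "i < n" and j: "j < n"
  shows "(perm_mat n \<sigma> * B * transpose_mat (perm_mat n \<sigma>)) $$ (i,j) = B $$ (\<sigma> i, \<sigma> j)"
proof -
  have \<sigma>n: "\<sigma> i < n" "\<sigma> j < n" using permutes_in_image[OF \<sigma>] i j by auto
  define PB where "PB = perm_mat n \<sigma> * B"
  have PB: "PB \<in> carrier_mat n n" unfolding PB_def perm_mat_def using B by auto
  have PB_row: "PB $$ (i,k) = B $$ (\<sigma> i, k)" if k: "k < n" for k
  proof -
    have "PB $$ (i,k) = (\<Sum>l<n. (if \<sigma> i = l then 1 else 0) * B $$ (l,k))"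
      unfolding PB_def perm_mat_def using B i k
      by (auto simp: scalar_prod_def row_def col_def lessThan_atLeast0 intro!: sum.cong)
    also have "\<dots> = (\<Sum>l<n. if l = \<sigma> i then B $$ (\<sigma> i, k) else 0)"
      by (rule sum.cong) auto
    finally show ?thesis using \<sigma>n by simp
  qed
  have "(PB * transpose_mat (perm_mat n \<sigma>)) $$ (i,j) = (\<Sum>k<n. PB $$ (i,k) * (if \<sigma> j = k then 1 else 0))"
    using PB i j unfolding perm_mat_def
    by (auto simp: index_mult_mat scalar_prod_def row_def col_def lessThan_atLeast0 intro!: sum.cong)
  also have "\<dots> = (\<Sum>k<n. if k = \<sigma> j then PB $$ (i, \<sigma> j) else 0)"
    by (rule sum.cong) auto
  also have "\<dots> = B $$ (\<sigma> i, \<sigma> j)" using \<sigma>n PB_row by simp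
  finally show ?thesis unfolding PB_def .
qed

lemma pick_pair_0: "a < (b::nat) \<Longrightarrow> pick {a,b} 0 = a"
  by (auto intro!: Least_equality)

lemma pick_pair_1: "a < (b::nat) \<Longrightarrow> pick {a,b} (Suc 0) = b"
  using pick_pair_0[of a b] by (auto intro!: Least_equality)

lemma pick_singleton: "pick {a::nat} 0 = a"
  by (auto intro!: Least_equality)

lemma mat_rank_ge_1:
  assumes X: "X \<in> carrier_mat n n" and a: "a < n" and Xa: "X $$ (a,a) \<noteq> 0"
  shows "1 \<le> mat_rank n X"
proof -
  have card: "{i. i < n \<and> i \<in> {a}} = {a}" using a by auto
  define S where "S = submatrix X {a} {a}"
  have "dim_row S = 1" "dim_col S = 1" unfolding S_def dim_submatrix using X card by auto
  then have S: "S \<in> carrier_mat 1 1" by auto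
  have "upper_triangular S" using S unfolding upper_triangular_def by auto
  moreover have "diag_mat S = [S $$ (0,0)]" unfolding diag_mat_def using S by simp
  moreover have "S $$ (0,0) = X $$ (a,a)"
    unfolding S_def using X card pick_singleton[of a] by (subst submatrix_index) auto
  ultimately have "det S \<noteq> 0" using det_upper_triangular[OF _ S] Xa by simp
  then have "card {j. j < n \<and> j \<in> {a}} \<le> vec_space.rank n X"
    unfolding S_def by (intro vec_space.rank_gt_minor[OF X])
  then show ?thesis unfolding mat_rank_def card by simp
qed

lemma mat_rank_ge_2_ordered:
  assumes X: "X \<in> carrier_mat n n" and ab: "a < b" "b < n"
    and Xba: "X $$ (b,a) = 0" and Xa: "X $$ (a,a) \<noteq> 0" and Xb: "X $$ (b,b) \<noteq> 0"
  shows "2 \<le> mat_rank n X"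
proof -
  have card: "{i. i < n \<and> i \<in> {a,b}} = {a,b}" and card2: "card {a,b} = 2" using ab by auto
  define S where "S = submatrix X {a,b} {a,b}"
  have "dim_row S = 2" "dim_col S = 2" unfolding S_def dim_submatrix using X card card2 by auto
  then have S: "S \<in> carrier_mat 2 2" by auto
  have S_index: "S $$ (k,l) = X $$ (pick {a,b} k, pick {a,b} l)" if "k < 2" "l < 2" for k l
    unfolding S_def using that X card card2 by (intro submatrix_index) auto
  note picks = pick_pair_0[OF ab(1)] pick_pair_1[OF ab(1)]
  have "upper_triangular S"
    unfolding upper_triangular_def
  proof (intro allI impI)
    fix i j assume "i < dim_row S" "j < i"
    then have "i = 1" "j = 0" using S by auto
    then show "S $$ (i,j) = 0" using S_index[of 1 0] picks Xba by simp
  qed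
  moreover have "diag_mat S = [S $$ (0,0), S $$ (1,1)]"
    unfolding diag_mat_def using S by (simp add: upt_rec)
  ultimately have "det S = X $$ (a,a) * X $$ (b,b)"
    using det_upper_triangular[OF _ S] S_index[of 0 0] S_index[of 1 1] picks by simp
  then have "det S \<noteq> 0" using Xa Xb by simp
  then have "card {j. j < n \<and> j \<in> {a,b}} \<le> vec_space.rank n X"
    unfolding S_def by (intro vec_space.rank_gt_minor[OF X])
  then show ?thesis unfolding mat_rank_def card card2 .
qed

lemma mat_rank_ge_2:
  assumes X: "X \<in> carrier_mat n n" and ab: "a \<noteq> b" "a < n" "b < n"
    and "X $$ (a,b) = 0" "X $$ (b,a) = 0" "X $$ (a,a) \<noteq> 0" "X $$ (b,b) \<noteq> 0"
  shows "2 \<le> mat_rank n X"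
proof (cases "a < b")
  case True then show ?thesis using mat_rank_ge_2_ordered[OF X] assms by blast
next
  case False then show ?thesis using mat_rank_ge_2_ordered[OF X, of b a] assms by simp
qed

definition signed_outer :: "nat \<Rightarrow> real \<Rightarrow> (nat \<Rightarrow> real) \<Rightarrow> real mat" where
  "signed_outer n \<alpha> c = mat n n (\<lambda>(i,j). \<alpha> * (c i * c j))"

lemma signed_outer_carrier: "signed_outer n \<alpha> c \<in> carrier_mat n n"
  unfolding signed_outer_def by simp

lemma index_signed_outer [simp]: "i < n \<Longrightarrow> j < n \<Longrightarrow> signed_outer n \<alpha> c $$ (i,j) = \<alpha> * (c i * c j)"
  unfolding signed_outer_def by simp

lemma dim_col_diag_sign_blocks:
  "dim_col (diag_block_mat (map (\<lambda>(\<alpha>, b). sign_block \<alpha> b) ps))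
    = dim_row (diag_block_mat (map (\<lambda>(\<alpha>, b). sign_block \<alpha> b) ps))"
  unfolding dim_diag_block_mat
proof (induction ps)
  case (Cons p ps) then show ?case using sign_block_carrier[of "fst p" "snd p"] by (cases p) simp
qed simp

lemma diag_sign_blocks_two_blocks:
  assumes valid: "list_all valid_block ((\<alpha>1, b1) # (\<alpha>2, b2) # ps)"
    and B: "B = diag_block_mat (map (\<lambda>(\<alpha>, b). sign_block \<alpha> b) ((\<alpha>1, b1) # (\<alpha>2, b2) # ps))"
    and Bn: "B \<in> carrier_mat n n"
  obtains m where "0 < m" "m < n" "B $$ (0,0) \<noteq> 0" "B $$ (m,m) \<noteq> 0" "B $$ (0,m) = 0" "B $$ (m,0) = 0"
proof -
  have v1: "\<alpha>1 > 0" "dim_vec b1 > 0" "b1 $ 0 * b1 $ 0 = 1"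
    and v2: "\<alpha>2 > 0" "dim_vec b2 > 0" "b2 $ 0 * b2 $ 0 = 1"
    using valid unfolding valid_block_def by auto
  define A1 where "A1 = sign_block \<alpha>1 b1"
  define A2 where "A2 = sign_block \<alpha>2 b2"
  define R2 where "R2 = diag_block_mat (map (\<lambda>(\<alpha>, b). sign_block \<alpha> b) ps)"
  define R where "R = diag_block_mat (map (\<lambda>(\<alpha>, b). sign_block \<alpha> b) ((\<alpha>2, b2) # ps))"
  define m where "m = dim_vec b1"
  have A1: "A1 \<in> carrier_mat m m" and A2: "A2 \<in> carrier_mat (dim_vec b2) (dim_vec b2)"
    unfolding A1_def A2_def m_def by (rule sign_block_carrier)+
  have R: "R = four_block_mat A2 (0\<^sub>m (dim_row A2) (dim_col R2)) (0\<^sub>m (dim_row R2) (dim_col A2)) R2"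
    unfolding R_def R2_def A2_def by (simp add: Let_def)
  have B_blocks: "B = four_block_mat A1 (0\<^sub>m (dim_row A1) (dim_col R)) (0\<^sub>m (dim_row R) (dim_col A1)) R"
    unfolding B R_def A1_def by (simp add: Let_def)
  have R2_sq: "dim_col R2 = dim_row R2" and R_sq: "dim_col R = dim_row R"
    unfolding R2_def R_def by (rule dim_col_diag_sign_blocks)+
  have n: "n = m + dim_row R" "dim_row R = dim_vec b2 + dim_row R2"
    using Bn B_blocks A1 R A2 by auto
  show thesis
  proof (rule that[of m])
    show "0 < m" "m < n" using v1 v2 n unfolding m_def by auto
    show "B $$ (0,0) \<noteq> 0"
      unfolding B_blocks using A1 v1 R_sq by (simp add: A1_def index_sign_block m_def)
    have "R $$ (0,0) = \<alpha>2"
      unfolding R using A2 v2 R2_sq by (simp add: A2_def index_sign_block)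
    then show "B $$ (m,m) \<noteq> 0"
      unfolding B_blocks using A1 v1 v2 n R_sq by (simp add: m_def)
    show "B $$ (0,m) = 0" "B $$ (m,0) = 0"
      unfolding B_blocks using A1 v1 v2 n R_sq by (auto simp: m_def)
  qed
qed

lemma Q_HbM_E:
  assumes "Xs \<in> Q_HbM n"
  obtains \<sigma> bs where "\<sigma> permutes {..<n}" "list_all valid_block bs"
    "diag_block_mat (map (\<lambda>(\<alpha>, b). sign_block \<alpha> b) bs) \<in> carrier_mat n n" "Xs \<in> carrier_mat n n"
    "\<And>i j. i < n \<Longrightarrow> j < n \<Longrightarrow>
       Xs $$ (i,j) = diag_block_mat (map (\<lambda>(\<alpha>, b). sign_block \<alpha> b) bs) $$ (\<sigma> i, \<sigma> j)"
proof -
  from assms obtain P bs where P: "is_perm_mat n P" and valid: "list_all valid_block bs"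
    and Bn: "diag_block_mat (map (\<lambda>(\<alpha>, b). sign_block \<alpha> b) bs) \<in> carrier_mat n n"
    and Xs_def: "Xs = P * diag_block_mat (map (\<lambda>(\<alpha>, b). sign_block \<alpha> b) bs) * transpose_mat P"
    and Xs: "Xs \<in> nz_row n"
    unfolding Q_HbM_def by blast
  obtain \<sigma> where \<sigma>: "\<sigma> permutes {..<n}" and P_def: "P = perm_mat n \<sigma>"
    using P unfolding is_perm_mat_def by blast
  show thesis
  proof (rule that[OF \<sigma> valid Bn])
    show "Xs \<in> carrier_mat n n" using Xs unfolding nz_row_def by blast
    show "Xs $$ (i,j) = diag_block_mat (map (\<lambda>(\<alpha>, b). sign_block \<alpha> b) bs) $$ (\<sigma> i, \<sigma> j)"
      if "i < n" "j < n" for i j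
      unfolding Xs_def P_def using index_perm_mat_conj[OF \<sigma> Bn that] .
  qed
qed

lemma Q_HbM_rank_one_imp_signed_outer:
  assumes n: "1 \<le> n" and Q: "Xs \<in> Q_HbM n" and rank: "mat_rank n Xs = 1"
  obtains \<alpha> c where "0 < \<alpha>" "sign_vector n c" "Xs = signed_outer n \<alpha> c"
proof -
  obtain \<sigma> bs where \<sigma>: "\<sigma> permutes {..<n}" and valid: "list_all valid_block bs"
    and Bn: "diag_block_mat (map (\<lambda>(\<alpha>, b). sign_block \<alpha> b) bs) \<in> carrier_mat n n"
    and Xs_n: "Xs \<in> carrier_mat n n"
    and Xs_index: "\<And>i j. i < n \<Longrightarrow> j < n \<Longrightarrow>
       Xs $$ (i,j) = diag_block_mat (map (\<lambda>(\<alpha>, b). sign_block \<alpha> b) bs) $$ (\<sigma> i, \<sigma> j)"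
    using Q_HbM_E[OF Q] by metis
  define B where "B = diag_block_mat (map (\<lambda>(\<alpha>, b). sign_block \<alpha> b) bs)"
  have \<sigma>n: "\<sigma> i < n" if "i < n" for i using permutes_in_image[OF \<sigma>] that by auto
  consider "bs = []" | \<alpha> b where "bs = [(\<alpha>, b)]" | \<alpha>1 b1 \<alpha>2 b2 ps where "bs = (\<alpha>1, b1) # (\<alpha>2, b2) # ps"
    by (metis list.exhaust prod.exhaust)
  then show thesis
  proof cases
    case 1 then show ?thesis using Bn n by auto
  next
    case (2 \<alpha> b)
    have B: "B = sign_block \<alpha> b"
      unfolding B_def 2 by (simp only: list.map prod.case diag_block_mat_singleton)
    have b: "dim_vec b = n" using Bn sign_block_carrier[of \<alpha> b] B unfolding B_def by auto
    have valid_b: "\<alpha> > 0" "\<forall>i<n. b $ i \<in> {-1,1}" using valid b unfolding 2 valid_block_def by auto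
    show ?thesis
    proof (rule that[of \<alpha> "\<lambda>i. b $ \<sigma> i"])
      show "0 < \<alpha>" using valid_b by simp
      show "sign_vector n (\<lambda>i. b $ \<sigma> i)" unfolding sign_vector_def using valid_b \<sigma>n by auto
      show "Xs = signed_outer n \<alpha> (\<lambda>i. b $ \<sigma> i)"
        using Xs_n Xs_index[folded B_def] \<sigma>n b by (intro eq_matI) (auto simp: B index_sign_block signed_outer_def)
    qed
  next
    case (3 \<alpha>1 b1 \<alpha>2 b2 ps)
    obtain m where m: "0 < m" "m < n" "B $$ (0,0) \<noteq> 0" "B $$ (m,m) \<noteq> 0" "B $$ (0,m) = 0" "B $$ (m,0) = 0"
      using diag_sign_blocks_two_blocks[OF _ _ Bn[folded B_def]] valid unfolding B_def 3 by blast
    define a b where "a = Hilbert_Choice.inv \<sigma> 0" and "b = Hilbert_Choice.inv \<sigma> m"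
    have ab: "\<sigma> a = 0" "\<sigma> b = m" unfolding a_def b_def using permutes_inverses(1)[OF \<sigma>] by auto
    have an: "a < n" and bn: "b < n"
      unfolding a_def b_def using permutes_in_image[OF permutes_inv[OF \<sigma>]] m by auto
    have "a \<noteq> b" using ab m by auto
    then have "2 \<le> mat_rank n Xs"
      using m ab Xs_index[folded B_def, OF an bn] Xs_index[folded B_def, OF bn an]
        Xs_index[folded B_def, OF an an] Xs_index[folded B_def, OF bn bn]
      by (intro mat_rank_ge_2[OF Xs_n _ an bn]) auto
    then show ?thesis using rank by simp
  qed
qed

lemma Q_HbM_rank_one_nonzero:
  assumes "1 \<le> n" "Xs \<in> Q_HbM n" "mat_rank n Xs = 1" "i < n" "j < n"
  shows "Xs $$ (i,j) \<noteq> 0"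
proof -
  obtain \<alpha> c where "0 < \<alpha>" "sign_vector n c" "Xs = signed_outer n \<alpha> c"
    using Q_HbM_rank_one_imp_signed_outer assms(1-3) by metis
  then show ?thesis using sign_vector_mult_self assms(4,5) by fastforce
qed

lemma signed_outer_in_Q_HbM:
  assumes n: "1 \<le> n" and \<alpha>: "0 < \<alpha>" and c: "sign_vector n c"
  shows "signed_outer n \<alpha> c \<in> Q_HbM n"
proof -
  define b where "b = vec n c"
  have block: "diag_block_mat (map (\<lambda>(\<alpha>, b). sign_block \<alpha> b) [(\<alpha>, b)]) = sign_block \<alpha> b"
    by (simp only: list.map prod.case diag_block_mat_singleton)
  have sb: "sign_block \<alpha> b \<in> carrier_mat n n" using sign_block_carrier[of \<alpha> b] unfolding b_def by simp
  have "signed_outer n \<alpha> c = perm_mat n id * sign_block \<alpha> b * transpose_mat (perm_mat n id)"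
    using index_perm_mat_conj[OF permutes_id sb]
    by (intro eq_matI) (auto simp: signed_outer_def perm_mat_def index_sign_block b_def)
  moreover have "diag_block_mat (map (\<lambda>(\<alpha>, b). sign_block \<alpha> b) [(\<alpha>, b)]) \<in> carrier_mat n n"
    unfolding block by (rule sb)
  moreover have "signed_outer n \<alpha> c \<in> nz_row n"
    using \<alpha> sign_vector_mult_self[OF c] unfolding nz_row_def signed_outer_def by (auto intro!: exI)
  moreover have "list_all valid_block [(\<alpha>, b)]"
    unfolding valid_block_def b_def using \<alpha> n c sign_vector_def by auto
  moreover have "is_perm_mat n (perm_mat n id)" unfolding is_perm_mat_def using permutes_id by blast
  ultimately show ?thesis unfolding Q_HbM_def block[symmetric] by blast
qed

lemma mat_rank_signed_outer:
  assumes n: "1 \<le> n" and \<alpha>: "0 < \<alpha>" and c: "sign_vector n c"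
  shows "mat_rank n (signed_outer n \<alpha> c) = 1"
proof -
  have "mat_rank n (signed_outer n \<alpha> c) \<le> 1"
    unfolding mat_rank_def using signed_outer_carrier
    by (rule vec_space.rank_le_1_product_entries[of _ n n "\<lambda>i. \<alpha> * c i" c]) (simp add: signed_outer_def)
  moreover have "1 \<le> mat_rank n (signed_outer n \<alpha> c)"
    using mat_rank_ge_1[OF signed_outer_carrier[of n \<alpha> c], of 0] n \<alpha> sign_vector_mult_self[OF c, of 0] by simp
  ultimately show ?thesis by simp
qed

section \<open>Stability and convergence\<close>

lemma f_HbM_signed_outer:
  assumes \<alpha>: "0 < \<alpha>" and c: "sign_vector n c"
  shows "f_HbM (signed_outer n \<alpha> c) = signed_outer n \<alpha> c"
proof (rule eq_matI)
  fix i j assume "i < dim_row (signed_outer n \<alpha> c)" "j < dim_col (signed_outer n \<alpha> c)"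
  then have i: "i < n" and j: "j < n" by (auto simp: signed_outer_def)
  have "(\<Sum>k<n. \<alpha> * (c i * c k) * (\<alpha> * (c j * c k))) = (\<Sum>k<n. \<alpha> * \<alpha> * (c i * c j) * (c k * c k))"
    by (simp add: algebra_simps)
  also have "\<dots> = n * (\<alpha> * \<alpha> * (c i * c j))" using sign_vector_mult_self[OF c] by simp
  finally have num: "(\<Sum>k<n. \<alpha> * (c i * c k) * (\<alpha> * (c j * c k))) = n * (\<alpha> * \<alpha> * (c i * c j))" .
  have den: "(\<Sum>k<n. \<bar>\<alpha> * (c i * c k)\<bar>) = n * \<alpha>"
    using sign_vector_abs_mult[OF c i] \<alpha> by (simp add: abs_mult)
  show "f_HbM (signed_outer n \<alpha> c) $$ (i,j) = signed_outer n \<alpha> c $$ (i,j)"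
    using index_f_HbM[OF signed_outer_carrier i j] i j \<alpha> by (simp add: num den)
qed (use f_HbM_carrier[OF signed_outer_carrier[of n \<alpha> c]] signed_outer_carrier[of n \<alpha> c] in auto)

lemma sign_vector_dist:
  assumes c: "sign_vector n c" and i: "i < n" and j: "j < n"
  shows "\<bar>y - \<alpha> * (c i * c j)\<bar> = \<bar>c i * c j * y - \<alpha>\<bar>"
proof -
  have "\<bar>y - \<alpha> * (c i * c j)\<bar> = \<bar>c i * c j\<bar> * \<bar>y - \<alpha> * (c i * c j)\<bar>"
    using sign_vector_abs_mult[OF c i j] by simp
  also have "\<dots> = \<bar>c i * c j * y - \<alpha> * ((c i * c i) * (c j * c j))\<bar>"
    unfolding abs_mult[symmetric] by (simp add: algebra_simps)
  finally show ?thesis using sign_vector_mult_self[OF c] i j by simp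
qed

lemma sign_vector_dist_signed_entry:
  assumes c: "sign_vector n c" and i: "i < n" and j: "j < n" and y: "y = c i * c j * \<bar>y\<bar>"
  shows "\<bar>y - \<alpha> * (c i * c j)\<bar> = \<bar>\<bar>y\<bar> - \<alpha>\<bar>"
proof -
  from y have "c i * c j * y = c i * c j * (c i * c j * \<bar>y\<bar>)" by (rule arg_cong)
  also have "\<dots> = (c i * c i) * (c j * c j) * \<bar>y\<bar>" by (simp only: mult_ac)
  finally have "c i * c j * y = \<bar>y\<bar>" using sign_vector_mult_self[OF c] i j by simp
  then show ?thesis using sign_vector_dist[OF c i j] by simp
qed

lemma near_signed_entry:
  assumes c: "sign_vector n c" and i: "i < n" and j: "j < n" and \<zeta>: "\<zeta> \<le> \<alpha>"
    and near: "\<bar>y - \<alpha> * (c i * c j)\<bar> < \<zeta>"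
  shows "y \<noteq> 0 \<and> y = c i * c j * \<bar>y\<bar>"
proof -
  have pos: "0 < c i * c j * y" using near \<zeta> unfolding sign_vector_dist[OF c i j] by (simp add: abs_less_iff)
  then have "c i * c j * y = \<bar>y\<bar>"
    using abs_mult[of "c i * c j" y] sign_vector_abs_mult[OF c i j] by simp
  moreover have "y = (c i * c i) * (c j * c j) * y" using sign_vector_mult_self[OF c] i j by simp
  then have "y = c i * c j * (c i * c j * y)" by (simp only: mult_ac)
  ultimately show ?thesis using pos by auto
qed

lemma hbm_stays_near_signed_outer:
  assumes x: "hbm_solution n x" and c: "sign_vector n c" and \<zeta>: "\<zeta> \<le> \<alpha>"
    and near: "\<And>i j. i < n \<Longrightarrow> j < n \<Longrightarrow> \<bar>x 0 i j - \<alpha> * (c i * c j)\<bar> < \<zeta>"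
    and i: "i < n" and j: "j < n"
  shows "\<bar>x t i j - \<alpha> * (c i * c j)\<bar> < \<zeta>"
proof -
  have bal: "balanced_by n c (x 0)"
    using near_signed_entry[OF c _ _ \<zeta> near] unfolding balanced_by_def by blast
  have n: "0 < n" using i by simp
  define a where "a t i j = \<bar>x t i j\<bar>" for t i j
  have a: "positive_hbm_solution n a" unfolding a_def by (rule positive_hbm_solution_abs[OF x c bal])
  have near0: "\<bar>a 0 i j - \<alpha>\<bar> < \<zeta>" if "i < n" "j < n" for i j
    using near[OF that] bal that sign_vector_dist_signed_entry[OF c that]
    unfolding balanced_by_def a_def by metis
  obtain i0 j0 where "i0 < n" "j0 < n" "a 0 i0 j0 = grid_min n (a 0)"
    using grid_min_attained[OF n] by blast
  then have "\<alpha> - \<zeta> < grid_min n (a 0)" using near0 by (metis abs_diff_less_iff)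
  moreover obtain i1 j1 where "i1 < n" "j1 < n" "a 0 i1 j1 = grid_max n (a 0)"
    using grid_max_attained[OF n] by blast
  then have "grid_max n (a 0) < \<alpha> + \<zeta>" using near0 by (metis abs_diff_less_iff)
  moreover have "grid_min n (a 0) \<le> a t i j \<and> a t i j \<le> grid_max n (a 0)"
    using positive_hbm_bounds[OF a] grid_min_le grid_max_ge i j by blast
  ultimately have "\<bar>a t i j - \<alpha>\<bar> < \<zeta>" unfolding abs_diff_less_iff by linarith
  moreover have "x t i j = c i * c j * \<bar>x t i j\<bar>"
    using hbm_balanced_by_invariant[OF x c bal] i j unfolding balanced_by_def by blast
  ultimately show ?thesis using sign_vector_dist_signed_entry[OF c i j] unfolding a_def by simp
qed

lemma signed_outer_locally_stable:
  assumes \<alpha>: "0 < \<alpha>" and c: "sign_vector n c"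
  shows "locally_stable_fp n f_HbM (signed_outer n \<alpha> c)"
  unfolding locally_stable_fp_def
proof (intro conjI allI impI)
  show "f_HbM (signed_outer n \<alpha> c) = signed_outer n \<alpha> c" using f_HbM_signed_outer[OF \<alpha> c] .
  fix \<epsilon> :: real assume \<epsilon>: "0 < \<epsilon>"
  show "\<exists>\<zeta>>0. \<forall>X0\<in>carrier_mat n n. (\<forall>i<n. \<forall>j<n. \<bar>X0 $$ (i,j) - signed_outer n \<alpha> c $$ (i,j)\<bar> < \<zeta>)
      \<longrightarrow> (\<forall>t i. i < n \<longrightarrow> (\<forall>j<n. \<bar>(f_HbM ^^ t) X0 $$ (i,j) - signed_outer n \<alpha> c $$ (i,j)\<bar> < \<epsilon>))"
  proof (intro exI[of _ "min \<epsilon> \<alpha>"] conjI ballI impI allI)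
    fix X0 t i j assume X0: "X0 \<in> carrier_mat n n" and i: "i < n" and j: "j < n"
      and near: "\<forall>i<n. \<forall>j<n. \<bar>X0 $$ (i,j) - signed_outer n \<alpha> c $$ (i,j)\<bar> < min \<epsilon> \<alpha>"
    have "\<bar>(f_HbM ^^ t) X0 $$ (i,j) - \<alpha> * (c i * c j)\<bar> < min \<epsilon> \<alpha>"
      using near by (intro hbm_stays_near_signed_outer[OF hbm_solution_funpow_f_HbM[OF X0] c _ _ i j]) auto
    then show "\<bar>(f_HbM ^^ t) X0 $$ (i,j) - signed_outer n \<alpha> c $$ (i,j)\<bar> < \<epsilon>" using i j by simp
  qed (use \<epsilon> \<alpha> in simp)
qed

lemma min_abs_entry_eq_grid_min: "min_abs_entry n X = grid_min n (\<lambda>i j. \<bar>X $$ (i,j)\<bar>)"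
  unfolding min_abs_entry_def grid_min_def by (rule arg_cong[where f = Min]) auto

lemma hbm_solution_traj: "X0 \<in> carrier_mat n n \<Longrightarrow> hbm_solution n (\<lambda>t i j. traj X0 t $$ (i,j))"
  unfolding traj_def by (rule hbm_solution_funpow_f_HbM)

lemma social_balance_of_liminf_pos:
  assumes n: "0 < n" and X0: "X0 \<in> carrier_mat n n"
    and lim: "liminf (\<lambda>t. ereal (min_abs_entry n (traj X0 t))) > 0"
  shows "\<exists>t0>0. \<forall>t\<ge>t0. social_balance n (traj X0 t)"
proof -
  define x where "x t i j = traj X0 t $$ (i,j)" for t i j
  obtain e where e: "0 < ereal e" "ereal e < liminf (\<lambda>t. ereal (min_abs_entry n (traj X0 t)))"
    using ereal_dense2[OF lim] by blast
  obtain T where T: "\<And>t. T \<le> t \<Longrightarrow> e < min_abs_entry n (traj X0 t)"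
    using less_LiminfD[OF e(2)] unfolding eventually_sequentially by auto
  interpret hbm_bounded_below n x e T
  proof
    show "hbm_solution n x" unfolding x_def using hbm_solution_traj[OF X0] .
    fix t i j assume "T \<le> t" "i < n" "j < n"
    then have "grid_min n (\<lambda>i j. \<bar>traj X0 t $$ (i,j)\<bar>) \<le> \<bar>x t i j\<bar>"
      using grid_min_le unfolding x_def by fastforce
    then show "e \<le> \<bar>x t i j\<bar>"
      using T \<open>T \<le> t\<close> unfolding min_abs_entry_eq_grid_min by fastforce
  qed (use n e(1) in auto)
  obtain t1 where t1: "\<forall>t\<ge>t1. \<not> misaligned n (x t)" using eventually_not_misaligned by blast
  show ?thesis
  proof (intro exI[of _ "Suc (max T t1)"] conjI allI impI)
    fix t assume "Suc (max T t1) \<le> t"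
    then obtain s where s: "t = Suc s" "T \<le> s" "t1 \<le> Suc s" by (cases t) auto
    show "social_balance n (traj X0 t)"
      using diag_pos_Suc[OF s(2)] sgn_triangle_Suc[OF s(2)] t1 s unfolding social_balance_def x_def by auto
  qed simp
qed

lemma sgn_middle_of_triangle:
  fixes u v w :: real
  assumes "u \<noteq> 0" "w \<noteq> 0" "sgn u * sgn v * sgn w = 1"
  shows "sgn v = sgn u * sgn w"
  using assms by (auto simp: sgn_if split: if_splits)

lemma social_balance_imp_balanced_by:
  assumes n: "0 < n" and bal: "social_balance n X"
  shows "sign_vector n (\<lambda>i. sgn (X $$ (0,i)))"
    and "balanced_by n (\<lambda>i. sgn (X $$ (0,i))) (\<lambda>i j. X $$ (i,j))"
proof -
  have triangle: "sgn (X $$ (i,j)) * sgn (X $$ (j,k)) * sgn (X $$ (k,i)) = 1"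
    if "i < n" "j < n" "k < n" for i j k
    using bal that unfolding social_balance_def by blast
  have nz: "X $$ (i,j) \<noteq> 0" if "i < n" "j < n" for i j
    using triangle[of i j j] that by auto
  show "sign_vector n (\<lambda>i. sgn (X $$ (0,i)))"
    unfolding sign_vector_def using nz n by (auto simp: sgn_if)
  have sym: "sgn (X $$ (j,0)) = sgn (X $$ (0,j))" if j: "j < n" for j
  proof -
    have "sgn (X $$ (0,j)) * sgn (X $$ (j,j)) * sgn (X $$ (j,0)) = 1" using triangle n j by blast
    moreover have "sgn (X $$ (j,j)) = 1" using bal j unfolding social_balance_def by simp
    ultimately show ?thesis using nz[OF n j] nz[OF j n] by (auto simp: sgn_if split: if_splits)
  qed
  show "balanced_by n (\<lambda>i. sgn (X $$ (0,i))) (\<lambda>i j. X $$ (i,j))"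
    unfolding balanced_by_def
  proof (intro allI impI conjI)
    fix i j assume i: "i < n" and j: "j < n"
    show "X $$ (i,j) \<noteq> 0" using nz[OF i j] .
    have "sgn (X $$ (i,j)) = sgn (X $$ (0,i)) * sgn (X $$ (j,0))"
      using sgn_middle_of_triangle triangle[of 0 i j] nz n i j by blast
    then show "X $$ (i,j) = sgn (X $$ (0,i)) * sgn (X $$ (0,j)) * \<bar>X $$ (i,j)\<bar>"
      unfolding sym[OF j] by (metis sgn_mult_abs)
  qed
qed

lemma converges_of_social_balance:
  assumes n: "0 < n" and X0: "X0 \<in> carrier_mat n n" and bal: "social_balance n (traj X0 t0)"
  obtains \<alpha> c where "0 < \<alpha>" "sign_vector n c"
    "\<And>i j. i < n \<Longrightarrow> j < n \<Longrightarrow> (\<lambda>t. traj X0 t $$ (i,j)) \<longlonglongrightarrow> signed_outer n \<alpha> c $$ (i,j)"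
proof -
  define c where "c i = sgn (traj X0 t0 $$ (0,i))" for i
  define y where "y s i j = traj X0 (s + t0) $$ (i,j)" for s i j
  have y: "hbm_solution n y" using hbm_solution_traj[OF X0] unfolding hbm_solution_def y_def by simp
  have c: "sign_vector n c" and y0: "balanced_by n c (y 0)"
    using social_balance_imp_balanced_by[OF n bal] unfolding c_def y_def by simp_all
  obtain \<alpha> where \<alpha>: "0 < \<alpha>" and lim: "\<And>i j. i < n \<Longrightarrow> j < n \<Longrightarrow> (\<lambda>s. \<bar>y s i j\<bar>) \<longlonglongrightarrow> \<alpha>"
    using positive_hbm_converges[OF positive_hbm_solution_abs[OF y c y0] n] by blast
  show thesis
  proof (rule that[OF \<alpha> c])
    fix i j assume i: "i < n" and j: "j < n"
    have "(\<lambda>s. c i * c j * \<bar>y s i j\<bar>) \<longlonglongrightarrow> c i * c j * \<alpha>"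
      using lim[OF i j] by (intro tendsto_intros)
    moreover have "c i * c j * \<bar>y s i j\<bar> = traj X0 (s + t0) $$ (i,j)" for s
      using hbm_balanced_by_invariant[OF y c y0] i j unfolding balanced_by_def y_def by metis
    ultimately have "(\<lambda>s. traj X0 (s + t0) $$ (i,j)) \<longlonglongrightarrow> signed_outer n \<alpha> c $$ (i,j)"
      using i j by (simp add: mult.commute)
    then show "(\<lambda>t. traj X0 t $$ (i,j)) \<longlonglongrightarrow> signed_outer n \<alpha> c $$ (i,j)"
      by (rule LIMSEQ_offset)
  qed
qed

lemma liminf_min_abs_entry_pos:
  assumes n: "0 < n" and nz: "\<And>i j. i < n \<Longrightarrow> j < n \<Longrightarrow> Xs $$ (i,j) \<noteq> 0"
    and lim: "\<And>i j. i < n \<Longrightarrow> j < n \<Longrightarrow> (\<lambda>t. X t $$ (i,j)) \<longlonglongrightarrow> Xs $$ (i,j)"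
  shows "liminf (\<lambda>t. ereal (min_abs_entry n (X t))) > 0"
proof -
  define \<delta> where "\<delta> = min_abs_entry n Xs"
  have \<delta>: "0 < \<delta>"
    using grid_min_attained[OF n, of "\<lambda>i j. \<bar>Xs $$ (i,j)\<bar>"] nz
    unfolding \<delta>_def min_abs_entry_eq_grid_min by fastforce
  have "eventually (\<lambda>t. \<delta> / 2 < \<bar>X t $$ (i,j)\<bar>) sequentially" if "(i,j) \<in> {..<n} \<times> {..<n}" for i j
  proof (rule order_tendstoD(1))
    show "(\<lambda>t. \<bar>X t $$ (i,j)\<bar>) \<longlonglongrightarrow> \<bar>Xs $$ (i,j)\<bar>" using lim that by (intro tendsto_intros) auto
    show "\<delta> / 2 < \<bar>Xs $$ (i,j)\<bar>"
      using grid_min_le[of i n j "\<lambda>i j. \<bar>Xs $$ (i,j)\<bar>"] \<delta> that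
      unfolding \<delta>_def min_abs_entry_eq_grid_min by auto
  qed
  then have "eventually (\<lambda>t. \<forall>p\<in>{..<n} \<times> {..<n}. \<delta> / 2 < \<bar>X t $$ p\<bar>) sequentially"
    by (intro eventually_ball_finite) auto
  then have "eventually (\<lambda>t. ereal (\<delta> / 2) \<le> ereal (min_abs_entry n (X t))) sequentially"
  proof (rule eventually_mono)
    fix t assume "\<forall>p\<in>{..<n} \<times> {..<n}. \<delta> / 2 < \<bar>X t $$ p\<bar>"
    then have "\<delta> / 2 \<le> grid_min n (\<lambda>i j. \<bar>X t $$ (i,j)\<bar>)"
      by (intro grid_min_ge[OF n]) (auto intro: less_imp_le)
    then show "ereal (\<delta> / 2) \<le> ereal (min_abs_entry n (X t))"
      unfolding min_abs_entry_eq_grid_min by simp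
  qed
  then have "ereal (\<delta> / 2) \<le> liminf (\<lambda>t. ereal (min_abs_entry n (X t)))"
    by (rule Liminf_bounded)
  moreover have "0 < ereal (\<delta> / 2)" using \<delta> by simp
  ultimately show ?thesis by (meson less_le_trans)
qed

theorem theorem3p7:
  fixes n :: nat
  assumes "n \<ge> 1"
  shows "(\<forall>Xs \<in> Q_HbM n. mat_rank n Xs = 1 \<longrightarrow> locally_stable_fp n f_HbM Xs)
    \<and> (\<forall>X0 \<in> nz_row n.
         ((liminf (\<lambda>t. ereal (min_abs_entry n (traj X0 t))) > 0)
            \<longleftrightarrow> (\<exists>t0>0. \<forall>t\<ge>t0. social_balance n (traj X0 t)))
       \<and> ((\<exists>t0>0. \<forall>t\<ge>t0. social_balance n (traj X0 t))
            \<longleftrightarrow> (\<exists>Xs \<in> Q_HbM n. mat_rank n Xs = 1 \<and>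
                  (\<forall>i<n. \<forall>j<n. (\<lambda>t. traj X0 t $$ (i,j)) \<longlonglongrightarrow> Xs $$ (i,j)))))"
proof (intro conjI ballI impI)
  fix Xs assume "Xs \<in> Q_HbM n" "mat_rank n Xs = 1"
  then obtain \<alpha> c where "0 < \<alpha>" "sign_vector n c" "Xs = signed_outer n \<alpha> c"
    using Q_HbM_rank_one_imp_signed_outer assms by metis
  then show "locally_stable_fp n f_HbM Xs" using signed_outer_locally_stable by blast
next
  fix X0 assume "X0 \<in> nz_row n"
  then have X0: "X0 \<in> carrier_mat n n" unfolding nz_row_def by blast
  have n: "0 < n" using assms by simp
  let ?nonvanishing = "liminf (\<lambda>t. ereal (min_abs_entry n (traj X0 t))) > 0"
  let ?balanced = "\<exists>t0>0. \<forall>t\<ge>t0. social_balance n (traj X0 t)"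
  let ?converges = "\<exists>Xs \<in> Q_HbM n. mat_rank n Xs = 1 \<and>
    (\<forall>i<n. \<forall>j<n. (\<lambda>t. traj X0 t $$ (i,j)) \<longlonglongrightarrow> Xs $$ (i,j))"
  have "?balanced" if ?nonvanishing using social_balance_of_liminf_pos[OF n X0 that] .
  moreover have "?converges" if balanced: ?balanced
  proof -
    obtain t0 where "social_balance n (traj X0 t0)" using balanced by blast
    then obtain \<alpha> c where "0 < \<alpha>" "sign_vector n c"
      "\<And>i j. i < n \<Longrightarrow> j < n \<Longrightarrow> (\<lambda>t. traj X0 t $$ (i,j)) \<longlonglongrightarrow> signed_outer n \<alpha> c $$ (i,j)"
      using converges_of_social_balance[OF n X0] by blast
    then show ?converges using signed_outer_in_Q_HbM mat_rank_signed_outer assms by blast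
  qed
  moreover have "?nonvanishing" if ?converges
    using that Q_HbM_rank_one_nonzero[OF assms] liminf_min_abs_entry_pos[OF n] by metis
  ultimately show "?nonvanishing \<longleftrightarrow> ?balanced" "?balanced \<longleftrightarrow> ?converges" by blast+
qed

end
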